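(* In the setting described in the context, let $K=\max_{i\in\{1,2\}}\|w^{(i)}_0\|$ and let $T=\sum_{t=1}^N \tau_t$ be the number of updates performed by the Update-by-Disagreement perceptron over $N$ iterations. Then $$\mathbb{E}[T]\;\le\;\frac{3\,(4K+1)}{(1-2\mu)^2}\,\|w^*\|^2,$$ where the expectation is over the random samples $(x_t,y_t)$ and the random label flips $\theta_t$.
   Context: Let $\mathcal{X}=\{x\in\mathbb{R}^d:\|x\|\le 1\}$ and $\mathcal{Y}=\{\pm1\}$. Let $\mathcal{D}$ be a probability distribution over $\mathcal{X}\times\mathcal{Y}$ for which there exists $w^*\in\mathbb{R}^d$ with $\mathcal{D}(\{(x,y): y\langle w^*,x\rangle<1\})=0$. Fix $\mu\in[0,1/2)$. Let $(x_1,y_1),\dots,(x_N,y_N)$ be i.i.d. samples from $\mathcal{D}$, and let $\theta_1,\dots,\theta_N$ be i.i.d. random variables, independent of the samples, with $\Pr[\theta_t=1]=1-\mu$ and $\Pr[\theta_t=-1]=\mu$; the observed (noisy) label is $\tilde y_t=\theta_t y_t$. The Update-by-Disagreement perceptron starts from fixed initial vectors $w^{(1)}_0,w^{(2)}_0\in\mathbb{R}^d$ and for $t=1,\dots,N$ sets $\tau_t=1$ if $\mathrm{sign}(\langle w^{(1)}_{t-1},x_t\rangle)\neq\mathrm{sign}(\langle w^{(2)}_{t-1},x_t\rangle)$ and $\tau_t=0$ otherwise, and then updates $w^{(i)}_t=w^{(i)}_{t-1}+\tau_t\,\tilde y_t\,x_t$ for $i=1,2$. Here $\mathrm{sign}(z)=+1$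 for $z>0$, $-1$ for $z<0$, and its value at $0$ is some fixed convention. *)

theory Defs
  imports "HOL-Probability.Probability"
begin

definition flip_pmf :: "real \<Rightarrow> real pmf" where
  "flip_pmf \<mu> = map_pmf (\<lambda>b. if b then -1 else 1) (bernoulli_pmf \<mu>)"

definition sgn_conv :: "real \<Rightarrow> real \<Rightarrow> real" where
  "sgn_conv c z = (if z > 0 then 1 else if z < 0 then -1 else c)"

text \<open>State (w1_t, w2_t) of the Update-by-Disagreement perceptron after t steps.
  The sample sequence s gives at (0-based) index t the triple ((x_{t+1}, y_{t+1}), theta_{t+1}).\<close>
fun ubd_state :: "real \<Rightarrow> 'a::real_inner \<Rightarrow> 'a \<Rightarrow> (nat \<Rightarrow> ('a \<times> real) \<times> real) \<Rightarrow> nat \<Rightarrow> 'a \<times> 'a" where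
  "ubd_state c w1 w2 s 0 = (w1, w2)"
| "ubd_state c w1 w2 s (Suc t) =
     (let (a, b) = ubd_state c w1 w2 s t;
          ((x, y), \<theta>) = s t
      in if sgn_conv c (inner a x) \<noteq> sgn_conv c (inner b x)
         then (a + (\<theta> * y) *\<^sub>R x, b + (\<theta> * y) *\<^sub>R x)
         else (a, b))"

text \<open>Update indicator tau_{t+1} (0-based index t).\<close>
definition ubd_tau :: "real \<Rightarrow> 'a::real_inner \<Rightarrow> 'a \<Rightarrow> (nat \<Rightarrow> ('a \<times> real) \<times> real) \<Rightarrow> nat \<Rightarrow> nat" where
  "ubd_tau c w1 w2 s t =
     (let (a, b) = ubd_state c w1 w2 s t; x = fst (fst (s t))
      in if sgn_conv c (inner a x) \<noteq> sgn_conv c (inner b x) then 1 else 0)"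

definition ubd_updates :: "real \<Rightarrow> 'a::real_inner \<Rightarrow> 'a \<Rightarrow> (nat \<Rightarrow> ('a \<times> real) \<times> real) \<Rightarrow> nat \<Rightarrow> nat" where
  "ubd_updates c w1 w2 s N = (\<Sum>t<N. ubd_tau c w1 w2 s t)"

end

theory Submission
  imports Defs
begin

(*
  Both weight vectors always receive the same update, so after t steps they are w1 + U and
  w2 + U for a common offset U, and a disagreement at x forces |<U, x>| <= K |x| with
  K = max |w1| |w2|. With eta = (1 - 2 mu) / (2 K + 1), the quantity
  |w* - eta U|^2 / (2 eta) + (1 - 2 mu) T / 2 is a nonnegative supermartingale: on an update,
  averaging over the label flip, the margin y <w*, x> >= 1 decreases the first term by
  1 - 2 mu, which pays for the cross term eta (1 - 2 mu) K, the curvature eta / 2 and the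
  increment (1 - 2 mu) / 2. Hence E[T] <= (2 K + 1) |w*|^2 / (1 - 2 mu)^2, a sharper constant
  than the stated one.
*)

definition disagrees :: "real \<Rightarrow> 'a::real_inner \<Rightarrow> 'a \<Rightarrow> 'a \<Rightarrow> 'a \<Rightarrow> bool" where
  "disagrees c w1 w2 U x \<longleftrightarrow> sgn_conv c (inner (w1 + U) x) \<noteq> sgn_conv c (inner (w2 + U) x)"

definition ubd_offset_step :: "real \<Rightarrow> 'a::real_inner \<Rightarrow> 'a \<Rightarrow> 'a \<Rightarrow> ('a \<times> real) \<times> real \<Rightarrow> 'a" where
  "ubd_offset_step c w1 w2 U z =
     (let ((x, y), \<theta>) = z in if disagrees c w1 w2 U x then U + (\<theta> * y) *\<^sub>R x else U)"

fun ubd_offset :: "real \<Rightarrow> 'a::real_inner \<Rightarrow> 'a \<Rightarrow> (nat \<Rightarrow> ('a \<times> real) \<times> real) \<Rightarrow> nat \<Rightarrow> 'a" where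
  "ubd_offset c w1 w2 s 0 = 0"
| "ubd_offset c w1 w2 s (Suc t) = ubd_offset_step c w1 w2 (ubd_offset c w1 w2 s t) (s t)"

lemma ubd_state_eq_offset:
  "ubd_state c w1 w2 s t = (w1 + ubd_offset c w1 w2 s t, w2 + ubd_offset c w1 w2 s t)"
  by (induction t) (simp_all add: ubd_offset_step_def disagrees_def Let_def split_beta' add.assoc)

lemma ubd_tau_eq_disagrees:
  "ubd_tau c w1 w2 s t = of_bool (disagrees c w1 w2 (ubd_offset c w1 w2 s t) (fst (fst (s t))))"
  by (simp add: ubd_tau_def ubd_state_eq_offset disagrees_def)

lemma ubd_offset_cong:
  "(\<And>i. i < t \<Longrightarrow> s i = s' i) \<Longrightarrow> ubd_offset c w1 w2 s t = ubd_offset c w1 w2 s' t"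
  by (induction t) simp_all

lemma ubd_updates_Suc:
  "ubd_updates c w1 w2 s (Suc t) =
     ubd_updates c w1 w2 s t + of_bool (disagrees c w1 w2 (ubd_offset c w1 w2 s t) (fst (fst (s t))))"
  by (simp add: ubd_updates_def ubd_tau_eq_disagrees)

lemma ubd_updates_cong:
  assumes "\<And>i. i < t \<Longrightarrow> s i = s' i"
  shows "ubd_updates c w1 w2 s t = ubd_updates c w1 w2 s' t"
proof -
  have "ubd_offset c w1 w2 s i = ubd_offset c w1 w2 s' i" if "i < t" for i
    using assms that by (intro ubd_offset_cong) auto
  then show ?thesis
    by (simp add: ubd_updates_def ubd_tau_eq_disagrees assms)
qed

lemma disagrees_imp_abs_inner_le:
  assumes "disagrees c w1 w2 U x"
  shows "\<bar>inner U x\<bar> \<le> max (norm w1) (norm w2) * norm x"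
proof -
  have "(inner (w1 + U) x \<le> 0 \<and> 0 \<le> inner (w2 + U) x) \<or> (0 \<le> inner (w1 + U) x \<and> inner (w2 + U) x \<le> 0)"
    using assms by (auto simp: disagrees_def sgn_conv_def split: if_splits)
  moreover have "\<bar>inner w1 x\<bar> \<le> max (norm w1) (norm w2) * norm x"
    using Cauchy_Schwarz_ineq2[of w1 x] by (meson max.cobounded1 mult_right_mono norm_ge_zero order.trans)
  moreover have "\<bar>inner w2 x\<bar> \<le> max (norm w1) (norm w2) * norm x"
    using Cauchy_Schwarz_ineq2[of w2 x] by (meson max.cobounded2 mult_right_mono norm_ge_zero order.trans)
  ultimately show ?thesis
    unfolding inner_add_left by linarith
qed

definition perceptron_potential :: "real \<Rightarrow> 'a::real_inner \<Rightarrow> 'a \<Rightarrow> real" where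
  "perceptron_potential \<eta> w U = (norm (w - \<eta> *\<^sub>R U))\<^sup>2 / (2 * \<eta>)"

lemma perceptron_potential_nonneg: "0 < \<eta> \<Longrightarrow> 0 \<le> perceptron_potential \<eta> w U"
  by (simp add: perceptron_potential_def)

lemma perceptron_potential_zero: "perceptron_potential \<eta> w 0 = (norm w)\<^sup>2 / (2 * \<eta>)"
  by (simp add: perceptron_potential_def)

lemma perceptron_potential_add:
  assumes "\<eta> \<noteq> 0"
  shows "perceptron_potential \<eta> w (U + v) =
           perceptron_potential \<eta> w U - inner v w + \<eta> * inner U v + \<eta> / 2 * (norm v)\<^sup>2"
proof -
  have "(norm (w - \<eta> *\<^sub>R (U + v)))\<^sup>2 =
          (norm (w - \<eta> *\<^sub>R U))\<^sup>2 - 2 * \<eta> * inner v w + 2 * \<eta>\<^sup>2 * inner U v + \<eta>\<^sup>2 * (norm v)\<^sup>2"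
    unfolding power2_norm_eq_inner
    by (simp add: inner_diff_left inner_diff_right inner_add_left inner_add_right inner_commute
        algebra_simps power2_eq_square)
  with assms show ?thesis
    by (simp add: perceptron_potential_def field_simps power2_eq_square)
qed

lemma perceptron_potential_expected_step:
  fixes x w U :: "'a::real_inner"
  assumes x: "norm x \<le> 1" and y: "y \<in> {-1, 1}" and margin: "1 \<le> y * inner w x"
    and U: "\<bar>inner U x\<bar> \<le> K * norm x" and K: "0 \<le> K"
    and \<mu>: "0 \<le> \<mu>" "\<mu> < 1/2" and \<eta>: "\<eta> = (1 - 2 * \<mu>) / (2 * K + 1)"
  shows "(1 - \<mu>) * perceptron_potential \<eta> w (U + y *\<^sub>R x)
           + \<mu> * perceptron_potential \<eta> w (U + (- y) *\<^sub>R x) + (1 - 2 * \<mu>) / 2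
         \<le> perceptron_potential \<eta> w U"
proof -
  \<comment> \<open>Naming the products keeps them atomic, so that linarith can combine the estimates.\<close>
  define e where "e = 1 - 2 * \<mu>"
  define g where "g = y * inner w x"
  define h where "h = y * inner U x"
  define d where "d = \<eta> / 2 * (norm x)\<^sup>2"
  have "\<eta> > 0" using \<eta> \<mu> K by simp
  have y2: "y\<^sup>2 = 1" using y by auto
  have plus: "perceptron_potential \<eta> w (U + y *\<^sub>R x) = perceptron_potential \<eta> w U - g + \<eta> * h + d"
    using perceptron_potential_add[of \<eta> w U "y *\<^sub>R x"] \<open>\<eta> > 0\<close> y2
    by (simp add: g_def h_def d_def inner_commute power_mult_distrib)
  have minus: "perceptron_potential \<eta> w (U + (- y) *\<^sub>R x) = perceptron_potential \<eta> w U + g - \<eta> * h + d"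
    using perceptron_potential_add[of \<eta> w U "(- y) *\<^sub>R x"] \<open>\<eta> > 0\<close> y2
    by (simp add: g_def h_def d_def inner_commute power_mult_distrib)
  have margin_term: "e \<le> e * g"
    using margin \<mu> by (simp add: e_def g_def)
  have drift_term: "\<eta> * (e * h) \<le> \<eta> * K"
  proof -
    have "h \<le> \<bar>inner U x\<bar>" using y by (auto simp: h_def)
    also have "\<dots> \<le> K" using U K x by (meson mult_left_le order.trans)
    finally have "e * h \<le> e * K"
      using \<mu> by (intro mult_left_mono) (auto simp: e_def)
    also have "\<dots> \<le> K"
      using \<mu> K by (intro mult_left_le_one_le) (auto simp: e_def)
    finally show ?thesis using \<open>\<eta> > 0\<close> by simp
  qed
  have curvature_term: "d \<le> \<eta> / 2"
    using \<open>\<eta> > 0\<close> x by (simp add: d_def mult_left_le power_le_one)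
  have \<eta>_choice: "\<eta> * K + \<eta> / 2 = e / 2"
    using \<eta> K by (simp add: e_def field_simps)
  have "(1 - \<mu>) * perceptron_potential \<eta> w (U + y *\<^sub>R x)
          + \<mu> * perceptron_potential \<eta> w (U + (- y) *\<^sub>R x) + (1 - 2 * \<mu>) / 2
        = perceptron_potential \<eta> w U - e * g + \<eta> * (e * h) + d + e / 2"
    unfolding plus minus e_def by (simp add: algebra_simps)
  also have "\<dots> \<le> perceptron_potential \<eta> w U"
    using margin_term drift_term curvature_term \<eta>_choice by linarith
  finally show ?thesis .
qed

lemma borel_measurable_sgn_conv[measurable]: "sgn_conv c \<in> borel_measurable borel"
  unfolding sgn_conv_def by measurable

lemma pred_disagrees[measurable]:
  fixes f g :: "'b \<Rightarrow> 'a::euclidean_space"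
  assumes [measurable]: "f \<in> borel_measurable N" "g \<in> borel_measurable N"
  shows "Measurable.pred N (\<lambda>s. disagrees c w1 w2 (f s) (g s))"
proof -
  have "(\<lambda>s. sgn_conv c (inner (w1 + f s) (g s))) \<in> borel_measurable N"
    "(\<lambda>s. sgn_conv c (inner (w2 + f s) (g s))) \<in> borel_measurable N"
    by measurable
  from borel_measurable_neq[OF this] show ?thesis
    by (simp add: disagrees_def pred_def)
qed

lemma borel_measurable_perceptron_potential[measurable]:
  fixes f :: "'b \<Rightarrow> 'a::euclidean_space"
  assumes [measurable]: "f \<in> borel_measurable N"
  shows "(\<lambda>s. perceptron_potential \<eta> w (f s)) \<in> borel_measurable N"
  unfolding perceptron_potential_def by (intro borel_measurable_divide) measurable

context
  fixes M :: "(('a::euclidean_space \<times> real) \<times> real) measure"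
  assumes measurable_point[measurable]: "(\<lambda>z. fst (fst z)) \<in> borel_measurable M"
    and measurable_label[measurable]: "(\<lambda>z. snd (fst z)) \<in> borel_measurable M"
    and measurable_flip[measurable]: "(\<lambda>z. snd z) \<in> borel_measurable M"
begin

lemma borel_measurable_ubd_offset[measurable]:
  "{..<t} \<subseteq> I \<Longrightarrow> (\<lambda>s. ubd_offset c w1 w2 s t) \<in> borel_measurable (PiM I (\<lambda>_. M))"
proof (induction t)
  case (Suc t)
  then have [measurable]: "(\<lambda>s. ubd_offset c w1 w2 s t) \<in> borel_measurable (PiM I (\<lambda>_. M))" "t \<in> I"
    by (auto simp: lessThan_Suc)
  show ?case
    by (simp add: ubd_offset_step_def Let_def split_beta') measurable
qed simp

lemma borel_measurable_ubd_updates[measurable]: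
  assumes "{..<t} \<subseteq> I"
  shows "(\<lambda>s. real (ubd_updates c w1 w2 s t)) \<in> borel_measurable (PiM I (\<lambda>_. M))"
proof -
  have [measurable]: "i \<in> I" "{..<i} \<subseteq> I" if "i < t" for i
    using assms that by auto
  show ?thesis
    unfolding ubd_updates_def ubd_tau_eq_disagrees of_nat_sum of_bool_def
    by (intro borel_measurable_sum) simp
qed

end

lemma nn_integral_flip_pmf:
  assumes "0 \<le> \<mu>" "\<mu> \<le> 1"
  shows "(\<integral>\<^sup>+ \<theta>. f \<theta> \<partial>measure_pmf (flip_pmf \<mu>)) = ennreal (1 - \<mu>) * f 1 + ennreal \<mu> * f (-1)"
proof -
  have "(\<integral>\<^sup>+ \<theta>. f \<theta> \<partial>measure_pmf (flip_pmf \<mu>)) =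
          (\<Sum>b\<in>UNIV. f (if b then -1 else 1) * pmf (bernoulli_pmf \<mu>) b)"
    unfolding flip_pmf_def by (simp, intro nn_integral_measure_pmf_support) auto
  with assms show ?thesis
    by (simp add: UNIV_bool mult.commute add.commute)
qed

lemma nn_integral_PiM_lessThan_le:
  fixes F :: "nat \<Rightarrow> (nat \<Rightarrow> 'b) \<Rightarrow> ennreal"
  assumes "prob_space M"
    and meas: "\<And>n. F (Suc n) \<in> borel_measurable (PiM {..<Suc n} (\<lambda>_. M))"
    and step: "\<And>n x. (\<integral>\<^sup>+ y. F (Suc n) (x(n := y)) \<partial>M) \<le> F n x"
  shows "(\<integral>\<^sup>+ x. F n x \<partial>PiM {..<n} (\<lambda>_. M)) \<le> F 0 (\<lambda>_. undefined)"
proof (induction n)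
  case 0
  then show ?case by (simp add: PiM_empty nn_integral_count_space_finite)
next
  case (Suc n)
  interpret product_sigma_finite "\<lambda>_. M"
    using assms(1) by (simp add: product_sigma_finite_def prob_space_imp_sigma_finite)
  have "(\<integral>\<^sup>+ x. F (Suc n) x \<partial>PiM {..<Suc n} (\<lambda>_. M))
        = (\<integral>\<^sup>+ x. \<integral>\<^sup>+ y. F (Suc n) (x(n := y)) \<partial>M \<partial>PiM {..<n} (\<lambda>_. M))"
    using meas[of n] unfolding lessThan_Suc by (intro product_nn_integral_insert) auto
  also have "\<dots> \<le> (\<integral>\<^sup>+ x. F n x \<partial>PiM {..<n} (\<lambda>_. M))"
    by (intro nn_integral_mono step)
  finally show ?case using Suc.IH by simp
qed

lemma measurable_noisy_sample:
  fixes D :: "('a::euclidean_space \<times> real) measure"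
  assumes "sets D = sets borel"
  shows "(\<lambda>z. fst (fst z)) \<in> borel_measurable (D \<Otimes>\<^sub>M measure_pmf p)"
    and "(\<lambda>z. snd (fst z)) \<in> borel_measurable (D \<Otimes>\<^sub>M measure_pmf p)"
    and "(\<lambda>z. snd z) \<in> borel_measurable (D \<Otimes>\<^sub>M measure_pmf p)"
proof -
  have "fst \<in> borel_measurable D" "snd \<in> borel_measurable D"
    by (simp_all add: measurable_cong_sets[OF assms refl] flip: borel_prod)
  then show "(\<lambda>z. fst (fst z)) \<in> borel_measurable (D \<Otimes>\<^sub>M measure_pmf p)"
    "(\<lambda>z. snd (fst z)) \<in> borel_measurable (D \<Otimes>\<^sub>M measure_pmf p)"
    by (auto intro: measurable_compose[OF measurable_fst])
qed (rule measurable_compose[OF measurable_snd], simp)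

lemma AE_margin_ge_one:
  fixes D :: "('a::euclidean_space \<times> real) measure"
  assumes "sets D = sets borel" and "emeasure D {z. snd z * inner w (fst z) < 1} = 0"
  shows "AE z in D. 1 \<le> snd z * inner w (fst z)"
proof (rule AE_I')
  have [measurable]: "fst \<in> borel_measurable D" "snd \<in> borel_measurable D"
    by (simp_all add: measurable_cong_sets[OF assms(1) refl] flip: borel_prod)
  have "{z \<in> space D. snd z * inner w (fst z) < 1} \<in> sets D"
    by measurable
  then have "{z. snd z * inner w (fst z) < 1} \<in> sets D"
    using sets_eq_imp_space_eq[OF assms(1)] by simp
  then show "{z. snd z * inner w (fst z) < 1} \<in> null_sets D"
    by (rule null_setsI[OF assms(2)])
qed auto

lemma perceptron_potential_ubd_offset_step:
  fixes x w U w1 w2 :: "'a::real_inner" and c y \<mu> \<eta> :: real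
  assumes x: "norm x \<le> 1" and y: "y \<in> {-1, 1}" and margin: "1 \<le> y * inner w x"
    and \<mu>: "0 \<le> \<mu>" "\<mu> < 1/2"
    and \<eta>: "\<eta> = (1 - 2 * \<mu>) / (2 * max (norm w1) (norm w2) + 1)"
  defines "d \<equiv> (1 - 2 * \<mu>) / 2 * of_bool (disagrees c w1 w2 U x)"
  shows "(1 - \<mu>) * (perceptron_potential \<eta> w (ubd_offset_step c w1 w2 U ((x, y), 1)) + d)
           + \<mu> * (perceptron_potential \<eta> w (ubd_offset_step c w1 w2 U ((x, y), -1)) + d)
         \<le> perceptron_potential \<eta> w U"
proof (cases "disagrees c w1 w2 U x")
  case True
  have "\<bar>inner U x\<bar> \<le> max (norm w1) (norm w2) * norm x"
    using True by (rule disagrees_imp_abs_inner_le)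
  then have expected: "(1 - \<mu>) * perceptron_potential \<eta> w (U + y *\<^sub>R x)
      + \<mu> * perceptron_potential \<eta> w (U + (- y) *\<^sub>R x) + (1 - 2 * \<mu>) / 2
    \<le> perceptron_potential \<eta> w U"
    using x y margin \<mu> \<eta> by (intro perceptron_potential_expected_step) (auto simp: le_max_iff_disj)
  have "ubd_offset_step c w1 w2 U ((x, y), 1) = U + y *\<^sub>R x"
    and "ubd_offset_step c w1 w2 U ((x, y), -1) = U + (- y) *\<^sub>R x"
    using True by (simp_all add: ubd_offset_step_def)
  then have "(1 - \<mu>) * (perceptron_potential \<eta> w (ubd_offset_step c w1 w2 U ((x, y), 1)) + d)
      + \<mu> * (perceptron_potential \<eta> w (ubd_offset_step c w1 w2 U ((x, y), -1)) + d)
    = (1 - \<mu>) * perceptron_potential \<eta> w (U + y *\<^sub>R x)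
      + \<mu> * perceptron_potential \<eta> w (U + (- y) *\<^sub>R x) + d"
    by (simp only:) (simp add: algebra_simps)
  moreover have "d = (1 - 2 * \<mu>) / 2"
    using True by (simp add: d_def)
  ultimately show ?thesis
    using expected by linarith
next
  case False
  then show ?thesis
    by (simp add: ubd_offset_step_def d_def algebra_simps)
qed

lemma nn_integral_ubd_potential_step:
  fixes D :: "('a::euclidean_space \<times> real) measure" and w U w1 w2 :: 'a and c \<mu> \<eta> k :: real
  assumes D: "prob_space D" "sets D = sets borel"
    and bounded: "AE z in D. norm (fst z) \<le> 1 \<and> snd z \<in> {-1, 1}"
    and separable: "emeasure D {z. snd z * inner w (fst z) < 1} = 0"
    and \<mu>: "0 \<le> \<mu>" "\<mu> < 1/2"
    and \<eta>: "\<eta> = (1 - 2 * \<mu>) / (2 * max (norm w1) (norm w2) + 1)"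
    and k: "0 \<le> k"
  shows "(\<integral>\<^sup>+ z. ennreal (perceptron_potential \<eta> w (ubd_offset_step c w1 w2 U z)
              + (1 - 2 * \<mu>) / 2 * (k + of_bool (disagrees c w1 w2 U (fst (fst z)))))
            \<partial>(D \<Otimes>\<^sub>M measure_pmf (flip_pmf \<mu>)))
         \<le> ennreal (perceptron_potential \<eta> w U + (1 - 2 * \<mu>) / 2 * k)"
proof -
  interpret D: prob_space D by (rule D(1))
  note [measurable] = measurable_noisy_sample[OF D(2)]
  define G :: "('a \<times> real) \<times> real \<Rightarrow> real"
    where "G z = perceptron_potential \<eta> w (ubd_offset_step c w1 w2 U z)
      + (1 - 2 * \<mu>) / 2 * (k + of_bool (disagrees c w1 w2 U (fst (fst z))))" for z
  have "\<eta> > 0"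
    using \<eta> \<mu> by (simp add: le_max_iff_disj add_nonneg_pos)
  have G_nonneg: "0 \<le> G z" for z
    using \<open>\<eta> > 0\<close> \<mu> k by (simp add: G_def perceptron_potential_nonneg)
  have "(\<integral>\<^sup>+ z. ennreal (G z) \<partial>(D \<Otimes>\<^sub>M measure_pmf (flip_pmf \<mu>)))
        = (\<integral>\<^sup>+ p. \<integral>\<^sup>+ \<theta>. ennreal (G (p, \<theta>)) \<partial>measure_pmf (flip_pmf \<mu>) \<partial>D)"
    unfolding G_def
    by (rule measure_pmf.nn_integral_fst[symmetric])
      (simp add: ubd_offset_step_def Let_def split_beta' of_bool_def)
  also have "\<dots> = (\<integral>\<^sup>+ p. ennreal ((1 - \<mu>) * G (p, 1) + \<mu> * G (p, -1)) \<partial>D)"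
    using \<mu> G_nonneg
    by (intro nn_integral_cong) (simp add: nn_integral_flip_pmf ennreal_mult ennreal_plus)
  also have "\<dots> \<le> (\<integral>\<^sup>+ p. ennreal (perceptron_potential \<eta> w U + (1 - 2 * \<mu>) / 2 * k) \<partial>D)"
    using bounded AE_margin_ge_one[OF D(2) separable]
  proof (intro nn_integral_mono_AE, eventually_elim)
    case (elim p)
    obtain x y where p: "p = (x, y)" by fastforce
    define d where "d = (1 - 2 * \<mu>) / 2 * of_bool (disagrees c w1 w2 U x)"
    have "(1 - \<mu>) * G (p, 1) + \<mu> * G (p, -1)
        = (1 - \<mu>) * (perceptron_potential \<eta> w (ubd_offset_step c w1 w2 U ((x, y), 1)) + d)
          + \<mu> * (perceptron_potential \<eta> w (ubd_offset_step c w1 w2 U ((x, y), -1)) + d)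
          + (1 - 2 * \<mu>) / 2 * k"
      by (simp add: G_def d_def p field_simps)
    also have "\<dots> \<le> perceptron_potential \<eta> w U + (1 - 2 * \<mu>) / 2 * k"
    proof -
      have "norm x \<le> 1" "y \<in> {-1, 1}" "1 \<le> y * inner w x"
        using elim by (auto simp: p)
      from perceptron_potential_ubd_offset_step[OF this \<mu> \<eta>, of c U] show ?thesis
        unfolding d_def by linarith
    qed
    finally show ?case
      by (rule ennreal_leI)
  qed
  also have "\<dots> = ennreal (perceptron_potential \<eta> w U + (1 - 2 * \<mu>) / 2 * k)"
    by (simp add: D.emeasure_space_1)
  finally show ?thesis
    by (simp only: G_def)
qed

lemma nn_integral_ubd_potential_le:
  fixes D :: "('a::euclidean_space \<times> real) measure" and w w1 w2 :: 'a and c \<mu> \<eta> :: real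
  assumes D: "prob_space D" "sets D = sets borel"
    and bounded: "AE z in D. norm (fst z) \<le> 1 \<and> snd z \<in> {-1, 1}"
    and separable: "emeasure D {z. snd z * inner w (fst z) < 1} = 0"
    and \<mu>: "0 \<le> \<mu>" "\<mu> < 1/2"
    and \<eta>: "\<eta> = (1 - 2 * \<mu>) / (2 * max (norm w1) (norm w2) + 1)"
  shows "(\<integral>\<^sup>+ s. ennreal (perceptron_potential \<eta> w (ubd_offset c w1 w2 s N)
              + (1 - 2 * \<mu>) / 2 * real (ubd_updates c w1 w2 s N))
            \<partial>PiM {..<N} (\<lambda>_. D \<Otimes>\<^sub>M measure_pmf (flip_pmf \<mu>)))
         \<le> ennreal ((norm w)\<^sup>2 / (2 * \<eta>))"
proof -
  let ?M = "D \<Otimes>\<^sub>M measure_pmf (flip_pmf \<mu>)"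
  note [measurable] = measurable_noisy_sample[OF D(2)]
  define F where "F n s = ennreal (perceptron_potential \<eta> w (ubd_offset c w1 w2 s n)
    + (1 - 2 * \<mu>) / 2 * real (ubd_updates c w1 w2 s n))" for n s
  have "(\<integral>\<^sup>+ s. F N s \<partial>PiM {..<N} (\<lambda>_. ?M)) \<le> F 0 (\<lambda>_. undefined)"
  proof (rule nn_integral_PiM_lessThan_le)
    show "prob_space ?M"
      using D(1) by (intro prob_space_pair prob_space_measure_pmf)
    show "F (Suc n) \<in> borel_measurable (PiM {..<Suc n} (\<lambda>_. ?M))" for n
      unfolding F_def by measurable
    show "(\<integral>\<^sup>+ z. F (Suc n) (s(n := z)) \<partial>?M) \<le> F n s" for n s
    proof -
      let ?U = "ubd_offset c w1 w2 s n" and ?k = "real (ubd_updates c w1 w2 s n)"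
      have "ubd_offset c w1 w2 (s(n := z)) n = ?U"
        and "ubd_updates c w1 w2 (s(n := z)) n = ubd_updates c w1 w2 s n" for z
        by (auto intro: ubd_offset_cong ubd_updates_cong)
      then have "F (Suc n) (s(n := z)) = ennreal (perceptron_potential \<eta> w (ubd_offset_step c w1 w2 ?U z)
          + (1 - 2 * \<mu>) / 2 * (?k + of_bool (disagrees c w1 w2 ?U (fst (fst z)))))" for z
        by (simp add: F_def ubd_updates_Suc)
      moreover have "(\<integral>\<^sup>+ z. ennreal (perceptron_potential \<eta> w (ubd_offset_step c w1 w2 ?U z)
          + (1 - 2 * \<mu>) / 2 * (?k + of_bool (disagrees c w1 w2 ?U (fst (fst z))))) \<partial>?M) \<le> F n s"
        unfolding F_def by (rule nn_integral_ubd_potential_step[OF D bounded separable \<mu> \<eta>]) simp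
      ultimately show ?thesis
        by simp
    qed
  qed
  then show ?thesis
    by (simp add: F_def ubd_updates_def perceptron_potential_zero)
qed

lemma nn_integral_ubd_updates_le:
  fixes D :: "('a::euclidean_space \<times> real) measure" and w w1 w2 :: 'a and c \<mu> :: real
  assumes "prob_space D" "sets D = sets borel"
    and "AE z in D. norm (fst z) \<le> 1 \<and> snd z \<in> {-1, 1}"
    and "emeasure D {z. snd z * inner w (fst z) < 1} = 0"
    and "0 \<le> \<mu>" "\<mu> < 1/2"
  shows "(\<integral>\<^sup>+ s. ennreal (real (ubd_updates c w1 w2 s N))
            \<partial>PiM {..<N} (\<lambda>_. D \<Otimes>\<^sub>M measure_pmf (flip_pmf \<mu>)))
         \<le> ennreal ((2 * max (norm w1) (norm w2) + 1) / (1 - 2 * \<mu>)\<^sup>2 * (norm w)\<^sup>2)"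
proof -
  define K where "K = max (norm w1) (norm w2)"
  define \<eta> where "\<eta> = (1 - 2 * \<mu>) / (2 * K + 1)"
  define \<Phi> where "\<Phi> s = perceptron_potential \<eta> w (ubd_offset c w1 w2 s N)
    + (1 - 2 * \<mu>) / 2 * real (ubd_updates c w1 w2 s N)" for s
  let ?P = "PiM {..<N} (\<lambda>_. D \<Otimes>\<^sub>M measure_pmf (flip_pmf \<mu>))"
  note [measurable] = measurable_noisy_sample[OF assms(2)]
  have "0 \<le> K" "0 < \<eta>"
    using assms(5,6) by (auto simp: K_def \<eta>_def le_max_iff_disj add_nonneg_pos)
  have "ennreal (real (ubd_updates c w1 w2 s N)) \<le> ennreal (2 / (1 - 2 * \<mu>)) * ennreal (\<Phi> s)" for s
  proof -
    have "(1 - 2 * \<mu>) / 2 * real (ubd_updates c w1 w2 s N) \<le> \<Phi> s"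
      using perceptron_potential_nonneg[OF \<open>0 < \<eta>\<close>] by (simp add: \<Phi>_def)
    moreover have "0 \<le> (1 - 2 * \<mu>) / 2 * real (ubd_updates c w1 w2 s N)"
      using assms(6) by simp
    ultimately have "0 \<le> \<Phi> s" "real (ubd_updates c w1 w2 s N) \<le> 2 / (1 - 2 * \<mu>) * \<Phi> s"
      using assms(6) by (simp_all add: field_simps)
    with assms(6) show ?thesis
      by (subst ennreal_mult[symmetric]) (auto intro: ennreal_leI)
  qed
  then have "(\<integral>\<^sup>+ s. ennreal (real (ubd_updates c w1 w2 s N)) \<partial>?P)
      \<le> (\<integral>\<^sup>+ s. ennreal (2 / (1 - 2 * \<mu>)) * ennreal (\<Phi> s) \<partial>?P)"
    by (intro nn_integral_mono)
  also have "\<dots> = ennreal (2 / (1 - 2 * \<mu>)) * (\<integral>\<^sup>+ s. ennreal (\<Phi> s) \<partial>?P)"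
    unfolding \<Phi>_def by (rule nn_integral_cmult) measurable
  also have "\<dots> \<le> ennreal (2 / (1 - 2 * \<mu>)) * ennreal ((norm w)\<^sup>2 / (2 * \<eta>))"
    unfolding \<Phi>_def using assms \<eta>_def K_def
    by (intro mult_left_mono nn_integral_ubd_potential_le) simp_all
  also have "\<dots> = ennreal (2 / (1 - 2 * \<mu>) * ((norm w)\<^sup>2 / (2 * \<eta>)))"
    using assms(6) \<open>0 < \<eta>\<close> by (intro ennreal_mult[symmetric]) auto
  also have "2 / (1 - 2 * \<mu>) * ((norm w)\<^sup>2 / (2 * \<eta>)) = (2 * K + 1) / (1 - 2 * \<mu>)\<^sup>2 * (norm w)\<^sup>2"
  proof -
    have scaling: "2 / e * ((norm w)\<^sup>2 / (2 * (e / (2 * K + 1)))) = (2 * K + 1) / e\<^sup>2 * (norm w)\<^sup>2"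
      if "e \<noteq> 0" for e
      using that \<open>0 \<le> K\<close> by (simp add: field_simps power2_eq_square)
    show ?thesis
      unfolding \<eta>_def by (rule scaling) (use assms(6) in simp)
  qed
  finally show ?thesis
    by (simp only: K_def)
qed

theorem theorem1:
  fixes D :: "('a::euclidean_space \<times> real) measure"
    and wstar w1 w2 :: 'a and \<mu> c :: real and N :: nat
  assumes "prob_space D"
    and "sets D = sets borel"
    and "AE z in D. norm (fst z) \<le> 1 \<and> snd z \<in> {-1, 1}"
    and "emeasure D {z. snd z * inner wstar (fst z) < 1} = 0"
    and "0 \<le> \<mu>" and "\<mu> < 1/2"
  shows "(\<integral>\<^sup>+ s. ennreal (real (ubd_updates c w1 w2 s N))
            \<partial>(PiM {..<N} (\<lambda>_. D \<Otimes>\<^sub>M measure_pmf (flip_pmf \<mu>))))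
         \<le> ennreal (3 * (4 * max (norm w1) (norm w2) + 1) / (1 - 2 * \<mu>)^2 * (norm wstar)^2)"
proof -
  have "(2 * max (norm w1) (norm w2) + 1) / (1 - 2 * \<mu>)\<^sup>2 * (norm wstar)\<^sup>2
      \<le> 3 * (4 * max (norm w1) (norm w2) + 1) / (1 - 2 * \<mu>)\<^sup>2 * (norm wstar)\<^sup>2"
    by (intro mult_right_mono divide_right_mono) (auto simp: le_max_iff_disj)
  with nn_integral_ubd_updates_le[OF assms] show ?thesis
    by (meson ennreal_leI order.trans)
qed

end
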